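(* Let $x,y\in V(T)$ with $y\neq x$, let $\ddot s(x)$ be a worst-case scenario of $T$ with respect to $x$, and suppose $y$ is a prime broadcast center of $T$ under $\ddot s(x)$. Let $s$ be the scenario with $w^s_{a,b}=w^{\alpha_{x,y}}_{a,b}$ if $(a,b)\in P_{x,y}\cup E(T_{y,x})$ and $w^s_{a,b}=w^{\ddot s(x)}_{a,b}$ otherwise. Then $s$ is a worst-case scenario of $T$ with respect to $x$, and $y\in B^s$.
   Context: $T$ is a finite tree; each edge $(u,v)$ carries an interval $[w^-_{u,v},w^+_{u,v}]$ of non-negative reals. A scenario $s$ assigns to every edge a weight $w^s_{u,v}\in[w^-_{u,v},w^+_{u,v}]$; $C$ is the set of all scenarios. A constant $\rho>0$ is fixed. Broadcast time (postal model): for a subtree $G$ of $T$ and $u\in V(G)$, $b^s(u,G)=0$ if $u$ has no neighbour in $G$; otherwise, if $v_1,\dots,v_h$ are the neighbours of $u$ in $G$ and $G_{v}$ is the component of $G-u$ containing $v$, $b^s(u,G)=\min_{\pi}\max_{1\le k\le h}\big(k\rho+w^s_{u,v_{\pi(k)}}+b^s(v_{\pi(k)},G_{v_{\pi(k)}})\big)$ over permutations $\pi$. $B^s=\{u: b^s(u,T)\le b^s(v,T)\ \forall v\}$. For distinct $x,y$, $T_{x,y}$ is the component of $T-x$ containing $y$ and $\bar T_{x,y}$ the subtree induced by $V(T)\setminus V(T_{x,y})$. $P_{x,y}$ is the set of edges of the $x$–$y$ path. A vertex $\hat\kappa\in B^s$ is a prime broadcast center under $s$ if $b^s(\hat\kappa,\bar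 T_{\hat\kappa,u})\ge b^s(u,\bar T_{u,\hat\kappa})$ for every neighbour $u$ of $\hat\kappa$. Regret $r^s_{x,y}=b^s(x,T)-b^s(y,T)$; $\mathrm{max\_r}(x)=\max\{r^s_{x,y}:y\in V(T),s\in C\}$; $s'$ is a worst-case scenario w.r.t. $x$ if $\mathrm{max\_r}(x)=r^{s'}_{x,y'}$ for some $y'$. Base scenario: for $v\neq x$, $\alpha_{x,v}$ has $w^{\alpha_{x,v}}_{a,b}=w^+_{a,b}$ if $(a,b)\in P_{x,v}\cup E(\bar T_{v,x})$ and $w^-_{a,b}$ otherwise. *)

theory Defs
  imports Complex_Main
begin

definition adj :: "'v set set \<Rightarrow> 'v set \<Rightarrow> ('v \<times> 'v) set" where
  "adj E W = {(a,b). a \<in> W \<and> b \<in> W \<and> {a,b} \<in> E}"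

definition is_tree :: "'v set \<Rightarrow> 'v set set \<Rightarrow> bool" where
  "is_tree V E \<longleftrightarrow> finite V \<and> V \<noteq> {} \<and>
     (\<forall>e\<in>E. \<exists>a b. e = {a,b} \<and> a \<noteq> b \<and> a \<in> V \<and> b \<in> V) \<and>
     (\<forall>a\<in>V. \<forall>b\<in>V. (a,b) \<in> (adj E V)\<^sup>*) \<and>
     card E + 1 = card V"

definition nbrs :: "'v set set \<Rightarrow> 'v set \<Rightarrow> 'v \<Rightarrow> 'v set" where
  "nbrs E W u = {v \<in> W. {u,v} \<in> E}"

definition comp :: "'v set set \<Rightarrow> 'v set \<Rightarrow> 'v \<Rightarrow> 'v \<Rightarrow> 'v set" where
  "comp E W u v = {z. (v,z) \<in> (adj E (W - {u}))\<^sup>*}"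

text \<open>Broadcast time with a fuel argument; with fuel at least the number of vertices
  of the subtree, the recursion is never cut off.  Permutations of the h neighbours are
  represented as distinct lists enumerating the neighbour set; position k (0-based)
  is informed at time (k+1)*rho.\<close>
fun bt :: "real \<Rightarrow> 'v set set \<Rightarrow> ('v set \<Rightarrow> real) \<Rightarrow> nat \<Rightarrow> 'v set \<Rightarrow> 'v \<Rightarrow> real" where
  "bt \<rho> E s 0 W u = 0"
| "bt \<rho> E s (Suc n) W u =
     (if nbrs E W u = {} then 0
      else Min ((\<lambda>vs. Max ((\<lambda>k. real (Suc k) * \<rho> + s {u, vs ! k}
                    + bt \<rho> E s n (comp E W u (vs ! k)) (vs ! k)) ` {..<length vs}))
              ` {vs. distinct vs \<and> set vs = nbrs E W u}))"

definition btime :: "real \<Rightarrow> 'v set set \<Rightarrow> ('v set \<Rightarrow> real) \<Rightarrow> 'v set \<Rightarrow> 'v \<Rightarrow> real" where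
  "btime \<rho> E s W u = bt \<rho> E s (card W) W u"

text \<open>T_{x,y}: vertex set of the component of T - x containing y; bar T_{x,y}: the rest\<close>
definition Tsub :: "'v set set \<Rightarrow> 'v set \<Rightarrow> 'v \<Rightarrow> 'v \<Rightarrow> 'v set" where
  "Tsub E V x y = comp E V x y"

definition Tbar :: "'v set set \<Rightarrow> 'v set \<Rightarrow> 'v \<Rightarrow> 'v \<Rightarrow> 'v set" where
  "Tbar E V x y = V - Tsub E V x y"

definition edges_of :: "'v set set \<Rightarrow> 'v set \<Rightarrow> 'v set set" where
  "edges_of E W = {e \<in> E. e \<subseteq> W}"

definition is_path :: "'v set set \<Rightarrow> 'v list \<Rightarrow> bool" where
  "is_path E xs \<longleftrightarrow> xs \<noteq> [] \<and> distinct xs \<and>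
     (\<forall>i < length xs - 1. {xs ! i, xs ! Suc i} \<in> E)"

definition path_edges :: "'v set set \<Rightarrow> 'v \<Rightarrow> 'v \<Rightarrow> 'v set set" where
  "path_edges E x y = {e. \<exists>xs. is_path E xs \<and> hd xs = x \<and> last xs = y \<and>
                            (\<exists>i < length xs - 1. e = {xs ! i, xs ! Suc i})}"

definition scenarios :: "'v set set \<Rightarrow> ('v set \<Rightarrow> real) \<Rightarrow> ('v set \<Rightarrow> real) \<Rightarrow> ('v set \<Rightarrow> real) set" where
  "scenarios E wl wu = {s. \<forall>e\<in>E. wl e \<le> s e \<and> s e \<le> wu e}"

definition regret :: "real \<Rightarrow> 'v set \<Rightarrow> 'v set set \<Rightarrow> ('v set \<Rightarrow> real) \<Rightarrow> 'v \<Rightarrow> 'v \<Rightarrow> real" where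
  "regret \<rho> V E s x y = btime \<rho> E s V x - btime \<rho> E s V y"

definition worst_case :: "real \<Rightarrow> 'v set \<Rightarrow> 'v set set \<Rightarrow> ('v set \<Rightarrow> real) \<Rightarrow> ('v set \<Rightarrow> real)
                          \<Rightarrow> 'v \<Rightarrow> ('v set \<Rightarrow> real) \<Rightarrow> bool" where
  "worst_case \<rho> V E wl wu x s' \<longleftrightarrow> s' \<in> scenarios E wl wu \<and>
     (\<exists>y'\<in>V. \<forall>y\<in>V. \<forall>s\<in>scenarios E wl wu. regret \<rho> V E s x y \<le> regret \<rho> V E s' x y')"

definition bcenters :: "real \<Rightarrow> 'v set \<Rightarrow> 'v set set \<Rightarrow> ('v set \<Rightarrow> real) \<Rightarrow> 'v set" where
  "bcenters \<rho> V E s = {u \<in> V. \<forall>v\<in>V. btime \<rho> E s V u \<le> btime \<rho> E s V v}"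

definition prime_center :: "real \<Rightarrow> 'v set \<Rightarrow> 'v set set \<Rightarrow> ('v set \<Rightarrow> real) \<Rightarrow> 'v \<Rightarrow> bool" where
  "prime_center \<rho> V E s k \<longleftrightarrow> k \<in> bcenters \<rho> V E s \<and>
     (\<forall>u \<in> nbrs E V k. btime \<rho> E s (Tbar E V k u) k \<ge> btime \<rho> E s (Tbar E V u k) u)"

definition alpha :: "'v set \<Rightarrow> 'v set set \<Rightarrow> ('v set \<Rightarrow> real) \<Rightarrow> ('v set \<Rightarrow> real) \<Rightarrow> 'v \<Rightarrow> 'v \<Rightarrow> ('v set \<Rightarrow> real)" where
  "alpha V E wl wu x v = (\<lambda>e. if e \<in> path_edges E x v \<union> edges_of E (Tbar E V v x) then wu e else wl e)"

end

theory Submission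
  imports Defs
begin

text \<open>Let x = x_0, ..., x_m = y be the tree path and p = x_{m-1}, and let R(a, u) be the time u
  needs to inform its side of the edge {a, u}. Under any nonnegative weights, x needs at least
  the weighted path length d(x, y) (each hop costing rho plus its weight) plus R(p, y), since
  every path vertex still has to inform its successor. Under the worst-case scenario the prime
  condition R(y, p) \<le> R(p, y) makes this bound tight: each path vertex may inform its successor
  first, all its other neighbours lying on sides that are no slower than R(p, y). Passing to s
  raises the path weights to their upper bounds, lowers the weights on the side of x, and keeps
  R(p, y); so b(x) grows by the full increase of d(x, y), whereas b(y) grows by at most that much.
  The regret of x against y therefore does not decrease, which makes s worst-case again and y a
  broadcast center under s.\<close>

section \<open>Connectivity in trees\<close>

lemma sym_adj: "sym (adj E W)"
  unfolding adj_def by (auto intro: symI simp: insert_commute)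

lemma rtrancl_adj_sym: "(a, b) \<in> (adj E W)\<^sup>* \<Longrightarrow> (b, a) \<in> (adj E W)\<^sup>*"
  using symD[OF sym_rtrancl[OF sym_adj]] .

lemma rtrancl_adj_mono:
  "W \<subseteq> W' \<Longrightarrow> E \<subseteq> E' \<Longrightarrow> (a, b) \<in> (adj E W)\<^sup>* \<Longrightarrow> (a, b) \<in> (adj E' W')\<^sup>*"
  using rtrancl_mono[of "adj E W" "adj E' W'"] unfolding adj_def by blast

lemma rtrancl_of_steps:
  assumes "\<And>k. i \<le> k \<Longrightarrow> k < j \<Longrightarrow> (f k, f (Suc k)) \<in> R" "i \<le> j"
  shows "(f i, f j) \<in> R\<^sup>*"
  using assms
proof (induction j)
  case (Suc j)
  then show ?case by (cases "i = Suc j") (auto intro: rtrancl_into_rtrancl)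
qed simp

lemma rtrancl_adj_insert_cases:
  assumes "a \<in> V" "b \<in> V" "(z, w) \<in> (adj (insert {a, b} F) V)\<^sup>*"
  shows "(z, w) \<in> (adj F V)\<^sup>*
      \<or> ((z, a) \<in> (adj F V)\<^sup>* \<and> (b, w) \<in> (adj F V)\<^sup>*)
      \<or> ((z, b) \<in> (adj F V)\<^sup>* \<and> (a, w) \<in> (adj F V)\<^sup>*)"
  using assms(3)
proof (induction rule: rtrancl_induct)
  case (step u w)
  have "(u, w) \<in> adj F V \<or> (u, w) = (a, b) \<or> (u, w) = (b, a)"
    using step(2) assms(1,2) unfolding adj_def by (auto simp: doubleton_eq_iff)
  then show ?case
    using step(3) by (auto intro: rtrancl_into_rtrancl)
qed simp

definition reach_class :: "'v set set \<Rightarrow> 'v set \<Rightarrow> 'v \<Rightarrow> 'v set" where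
  "reach_class E V z = {w \<in> V. (z, w) \<in> (adj E V)\<^sup>*}"

lemma reach_class_eq: "(z, w) \<in> (adj E V)\<^sup>* \<Longrightarrow> reach_class E V z = reach_class E V w"
  unfolding reach_class_def by (auto intro: rtrancl_trans rtrancl_adj_sym)

text \<open>Adding an edge merges at most two classes, so the number of classes drops by at most one.\<close>

lemma card_le_card_edges_add_classes:
  assumes "finite V" "finite E" "\<forall>e\<in>E. \<exists>a b. e = {a, b} \<and> a \<in> V \<and> b \<in> V"
  shows "card V \<le> card E + card (reach_class E V ` V)"
  using assms(2,3)
proof (induction E rule: finite_induct)
  case empty
  have "reach_class {} V ` V = (\<lambda>z. {z}) ` V"
    unfolding reach_class_def adj_def by auto
  moreover have "card ((\<lambda>z. {z}) ` V) = card V"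
    by (rule card_image) (auto simp: inj_on_def)
  ultimately show ?case by simp
next
  case (insert e F)
  obtain a b where e: "e = {a, b}" "a \<in> V" "b \<in> V" using insert.prems by auto
  let ?cF = "reach_class F V" and ?cE = "reach_class (insert e F) V" and ?A = "V - reach_class F V b"
  have factor: "?cF ` ?A = (\<lambda>C. ?cF (SOME z. z \<in> ?A \<and> ?cE z = C)) ` (?cE ` ?A)"
  proof -
    have "?cF z = ?cF (SOME z'. z' \<in> ?A \<and> ?cE z' = ?cE z)" if z: "z \<in> ?A" for z
    proof -
      define z' where "z' = (SOME z'. z' \<in> ?A \<and> ?cE z' = ?cE z)"
      have z': "z' \<in> ?A" "?cE z' = ?cE z"
        using someI[of "\<lambda>z'. z' \<in> ?A \<and> ?cE z' = ?cE z" z] z unfolding z'_def by auto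
      then have "(z, z') \<in> (adj (insert {a, b} F) V)\<^sup>*"
        using e(1) unfolding reach_class_def by blast
      then have "(z, z') \<in> (adj F V)\<^sup>*"
        using rtrancl_adj_insert_cases[OF e(2,3)] z z'(1)
        unfolding reach_class_def by (auto dest: rtrancl_adj_sym)
      then show ?thesis unfolding z'_def by (rule reach_class_eq)
    qed
    then show ?thesis by (auto simp: image_image)
  qed
  have "?cF ` V \<subseteq> insert (?cF b) (?cF ` ?A)"
    using reach_class_eq[of b _ F V] unfolding reach_class_def by blast
  then have "card (?cF ` V) \<le> card (insert (?cF b) (?cF ` ?A))"
    by (rule card_mono[rotated]) (use assms(1) in auto)
  also have "\<dots> \<le> Suc (card (?cF ` ?A))"
    by (simp add: card_insert_if assms(1))
  also have "card (?cF ` ?A) \<le> card (?cE ` ?A)"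
    unfolding factor by (rule card_image_le) (use assms(1) in simp)
  also have "card (?cE ` ?A) \<le> card (?cE ` V)"
    by (rule card_mono) (use assms(1) in auto)
  finally show ?case using insert by simp
qed

lemma tree_edge: "is_tree V E \<Longrightarrow> e \<in> E \<Longrightarrow> \<exists>a b. e = {a, b} \<and> a \<noteq> b \<and> a \<in> V \<and> b \<in> V"
  unfolding is_tree_def by blast

lemma tree_edge_ends: "is_tree V E \<Longrightarrow> {a, b} \<in> E \<Longrightarrow> a \<in> V \<and> b \<in> V \<and> a \<noteq> b"
  using tree_edge[of V E "{a, b}"] by (auto simp: doubleton_eq_iff)

lemma tree_edge_subset: "is_tree V E \<Longrightarrow> e \<in> E \<Longrightarrow> e \<subseteq> V"
  using tree_edge by blast

lemma tree_edge_nonempty: "is_tree V E \<Longrightarrow> e \<in> E \<Longrightarrow> e \<noteq> {}"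
  using tree_edge by blast

lemma tree_no_loops: "is_tree V E \<Longrightarrow> \<forall>z. {z} \<notin> E"
  using tree_edge by fastforce

lemma tree_finite: "is_tree V E \<Longrightarrow> finite V"
  unfolding is_tree_def by simp

lemma tree_finite_edges: "is_tree V E \<Longrightarrow> finite E"
  using finite_subset[of E "Pow V"] tree_edge_subset tree_finite by blast

lemma tree_connected: "is_tree V E \<Longrightarrow> a \<in> V \<Longrightarrow> b \<in> V \<Longrightarrow> (a, b) \<in> (adj E V)\<^sup>*"
  unfolding is_tree_def by blast

text \<open>Without the edge there are at least two classes, yet every vertex would still be connected to a.\<close>

lemma tree_edge_bridge:
  assumes t: "is_tree V E" and e: "{a, b} \<in> E"
  shows "(a, b) \<notin> (adj (E - {{a, b}}) V)\<^sup>*"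
proof
  assume ab: "(a, b) \<in> (adj (E - {{a, b}}) V)\<^sup>*"
  let ?F = "E - {{a, b}}"
  have abV: "a \<in> V" "b \<in> V" using tree_edge_ends[OF t e] by auto
  have "card E = card ?F + 1"
    using tree_finite_edges[OF t] e card_gt_0_iff[of E] by auto
  moreover have "card V \<le> card ?F + card (reach_class ?F V ` V)"
    by (rule card_le_card_edges_add_classes) (use t tree_finite_edges[OF t] in \<open>auto simp: is_tree_def\<close>)
  ultimately have "card (reach_class ?F V ` V) \<ge> 2"
    using t unfolding is_tree_def by simp
  moreover have "reach_class ?F V ` V \<subseteq> {reach_class ?F V a}"
  proof clarify
    fix z assume "z \<in> V"
    moreover have "insert {a, b} ?F = E" using e by blast
    ultimately have "(a, z) \<in> (adj (insert {a, b} ?F) V)\<^sup>*"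
      using tree_connected[OF t abV(1)] by simp
    then have "(a, z) \<in> (adj ?F V)\<^sup>*"
      using rtrancl_adj_insert_cases[OF abV, of a z ?F] ab by (auto intro: rtrancl_trans)
    then show "reach_class ?F V z = reach_class ?F V a" by (simp add: reach_class_eq)
  qed
  then have "card (reach_class ?F V ` V) \<le> 1"
    using card_mono[of "{reach_class ?F V a}"] by simp
  ultimately show False by simp
qed

lemma mem_comp_iff: "z \<in> comp E W u v \<longleftrightarrow> (v, z) \<in> (adj E (W - {u}))\<^sup>*"
  unfolding comp_def by simp

lemma comp_self: "v \<in> comp E W u v"
  unfolding comp_def by simp

lemma comp_subset: "comp E W u v \<subseteq> insert v (W - {u})"
proof
  fix z assume "z \<in> comp E W u v"
  then have "(v, z) \<in> (adj E (W - {u}))\<^sup>*" by (simp add: mem_comp_iff)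
  then show "z \<in> insert v (W - {u})"
    by (induction rule: rtrancl_induct) (auto simp: adj_def)
qed

lemma comp_eq: "(a, b) \<in> (adj E (W - {u}))\<^sup>* \<Longrightarrow> comp E W u a = comp E W u b"
  unfolding comp_def by (auto intro: rtrancl_trans rtrancl_adj_sym)

lemma rtrancl_adj_restrict:
  assumes "(v, z) \<in> (adj E S)\<^sup>*" "\<And>y. (v, y) \<in> (adj E S)\<^sup>* \<Longrightarrow> y \<in> S'"
  shows "(v, z) \<in> (adj E (S \<inter> S'))\<^sup>*"
  using assms(1)
proof (induction rule: rtrancl_induct)
  case (step y z)
  then have "(y, z) \<in> adj E (S \<inter> S')"
    using assms(2) rtrancl_into_rtrancl[of v y "adj E S" z] unfolding adj_def by auto
  with step(3) show ?case by (rule rtrancl_into_rtrancl)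
qed simp

lemma comp_edge_disjoint:
  assumes t: "is_tree V E" and e: "{a, b} \<in> E"
  shows "comp E V a b \<inter> comp E V b a = {}"
proof (rule ccontr)
  assume "comp E V a b \<inter> comp E V b a \<noteq> {}"
  then obtain z where "(b, z) \<in> (adj E (V - {a}))\<^sup>*" "(a, z) \<in> (adj E (V - {b}))\<^sup>*"
    unfolding comp_def by auto
  moreover have "adj E (V - {a}) \<subseteq> adj (E - {{a, b}}) V" "adj E (V - {b}) \<subseteq> adj (E - {{a, b}}) V"
    unfolding adj_def by (auto simp: doubleton_eq_iff)
  ultimately have "(b, z) \<in> (adj (E - {{a, b}}) V)\<^sup>*" "(a, z) \<in> (adj (E - {{a, b}}) V)\<^sup>*"
    using rtrancl_mono by blast+
  then have "(a, b) \<in> (adj (E - {{a, b}}) V)\<^sup>*"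
    by (meson rtrancl_adj_sym rtrancl_trans)
  then show False using tree_edge_bridge[OF t e] by simp
qed

lemma comp_edge_Un:
  assumes t: "is_tree V E" and e: "{a, b} \<in> E"
  shows "comp E V a b \<union> comp E V b a = V"
proof
  have ab: "a \<in> V" "b \<in> V" "a \<noteq> b" using tree_edge_ends[OF t e] by auto
  then show "comp E V a b \<union> comp E V b a \<subseteq> V"
    using comp_subset[of E V a b] comp_subset[of E V b a] by auto
  have extend: "w \<in> comp E V c d"
    if "v \<in> comp E V c d" "(v, w) \<in> adj E V" "w \<noteq> c" "c \<in> V" "d \<in> V" "c \<noteq> d" for c d v w
  proof -
    have "v \<noteq> c" using that(1,6) comp_subset[of E V c d] by auto
    then have "(v, w) \<in> adj E (V - {c})" using that(2,3) unfolding adj_def by auto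
    then show ?thesis using that(1) by (auto simp: mem_comp_iff intro: rtrancl_into_rtrancl)
  qed
  have "z \<in> comp E V a b \<union> comp E V b a" if "(a, z) \<in> (adj E V)\<^sup>*" for z
    using that
  proof (induction rule: rtrancl_induct)
    case base then show ?case using comp_self by fast
  next
    case (step v w)
    then show ?case
      using extend[of v a b w] extend[of v b a w] comp_self[of a E V b] comp_self[of b E V a] ab by blast
  qed
  then show "V \<subseteq> comp E V a b \<union> comp E V b a"
    using tree_connected[OF t ab(1)] by blast
qed

lemma Tbar_edge:
  assumes "is_tree V E" "{a, b} \<in> E"
  shows "Tbar E V a b = comp E V b a"
  unfolding Tbar_def Tsub_def using comp_edge_disjoint[OF assms] comp_edge_Un[OF assms] by blast

lemma comp_restrict:
  assumes "u \<in> W" "W \<subseteq> V" "comp E V u v \<subseteq> W"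
  shows "comp E W u v = comp E V u v"
proof
  show "comp E W u v \<subseteq> comp E V u v"
    unfolding comp_def using rtrancl_adj_mono[of "W - {u}" "V - {u}" E E] assms by auto
  show "comp E V u v \<subseteq> comp E W u v"
  proof
    fix z assume "z \<in> comp E V u v"
    then have "(v, z) \<in> (adj E ((V - {u}) \<inter> W))\<^sup>*"
      by (intro rtrancl_adj_restrict) (use assms(3) in \<open>auto simp: mem_comp_iff\<close>)
    moreover have "(V - {u}) \<inter> W = W - {u}" using assms by auto
    ultimately show "z \<in> comp E W u v" by (simp add: mem_comp_iff)
  qed
qed

lemma comp_subset_comp_edge:
  assumes t: "is_tree V E" and e1: "{a, u} \<in> E" and e2: "{u, v} \<in> E" and av: "a \<noteq> v"
  shows "comp E V u v \<subseteq> comp E V a u"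
proof
  have au: "a \<in> V" "u \<in> V" "a \<noteq> u" using tree_edge_ends[OF t e1] by auto
  have uv: "v \<in> V" "u \<noteq> v" using tree_edge_ends[OF t e2] by auto
  have "(u, a) \<in> adj E (V - {v})"
    using e1 au uv av unfolding adj_def by (auto simp: insert_commute)
  then have "a \<notin> comp E V u v"
    using comp_edge_disjoint[OF t e2] by (auto simp: mem_comp_iff)
  then have sub: "(V - {u}) \<inter> comp E V u v \<subseteq> V - {a}" by auto
  fix z assume "z \<in> comp E V u v"
  then have "(v, z) \<in> (adj E ((V - {u}) \<inter> comp E V u v))\<^sup>*"
    by (intro rtrancl_adj_restrict) (auto simp: mem_comp_iff)
  then have "(v, z) \<in> (adj E (V - {a}))\<^sup>*"
    using rtrancl_adj_mono[OF sub order_refl] by blast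
  moreover have "(u, v) \<in> adj E (V - {a})"
    using e2 au uv av unfolding adj_def by auto
  ultimately show "z \<in> comp E V a u"
    by (simp add: mem_comp_iff converse_rtrancl_into_rtrancl)
qed

lemma nbrs_comp_edge:
  assumes t: "is_tree V E" and e: "{a, u} \<in> E"
  shows "nbrs E (comp E V a u) u = nbrs E V u - {a}"
proof -
  have au: "a \<in> V" "u \<in> V" "a \<noteq> u" using tree_edge_ends[OF t e] by auto
  have "z \<in> comp E V a u" if "z \<in> V" "{u, z} \<in> E" "z \<noteq> a" for z
    using that au unfolding adj_def comp_def by (auto intro: r_into_rtrancl)
  moreover have "comp E V a u \<subseteq> V - {a}"
    using comp_subset[of E V a u] au by auto
  ultimately show ?thesis unfolding nbrs_def by auto
qed

lemma comp_edge_props: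
  assumes "is_tree V E" "{a, u} \<in> E"
  shows "finite (comp E V a u)" "u \<in> comp E V a u" "comp E V a u \<subseteq> V"
proof -
  show "comp E V a u \<subseteq> V"
    using comp_subset[of E V a u] tree_edge_ends[OF assms] by auto
  then show "finite (comp E V a u)" using tree_finite[OF assms(1)] finite_subset by blast
qed (rule comp_self)

section \<open>Optimal informing orders\<close>

text \<open>A vertex informs its neighbours N in the order vs, one every rho time units, and neighbour v
  needs g v more time once informed; order_time is the completion time and sched_time its optimum
  over all orders (the min-max in the definition of bt).\<close>

definition order_time :: "real \<Rightarrow> ('v \<Rightarrow> real) \<Rightarrow> 'v list \<Rightarrow> real" where
  "order_time \<rho> g vs = Max ((\<lambda>k. real (Suc k) * \<rho> + g (vs ! k)) ` {..<length vs})"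

definition sched_time :: "real \<Rightarrow> ('v \<Rightarrow> real) \<Rightarrow> 'v set \<Rightarrow> real" where
  "sched_time \<rho> g N =
     (if N = {} then 0 else Min (order_time \<rho> g ` {vs. distinct vs \<and> set vs = N}))"

lemma finite_distinct_enums:
  assumes "finite N"
  shows "finite {vs. distinct vs \<and> set vs = N}"
proof -
  have "{vs. distinct vs \<and> set vs = N} \<subseteq> {vs. set vs \<subseteq> N \<and> length vs \<le> card N}"
    using distinct_card by fastforce
  then show ?thesis using finite_lists_length_le[OF assms] finite_subset by blast
qed

lemma order_time_ge: "k < length vs \<Longrightarrow> real (Suc k) * \<rho> + g (vs ! k) \<le> order_time \<rho> g vs"
  unfolding order_time_def by (rule Max_ge) auto

lemma order_time_le:
  "vs \<noteq> [] \<Longrightarrow> (\<And>k. k < length vs \<Longrightarrow> real (Suc k) * \<rho> + g (vs ! k) \<le> c) \<Longrightarrow> order_time \<rho> g vs \<le> c"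
  unfolding order_time_def by (subst Max_le_iff) auto

lemma sched_time_attained:
  assumes "finite N" "N \<noteq> {}"
  obtains vs where "distinct vs" "set vs = N" "sched_time \<rho> g N = order_time \<rho> g vs"
proof -
  have "sched_time \<rho> g N \<in> order_time \<rho> g ` {vs. distinct vs \<and> set vs = N}"
    unfolding sched_time_def if_not_P[OF assms(2)]
    by (rule Min_in) (use finite_distinct_enums[OF assms(1)] finite_distinct_list[OF assms(1)] in auto)
  then show ?thesis using that by auto
qed

lemma sched_time_le_order_time:
  assumes "finite N" "distinct vs" "set vs = N" "N \<noteq> {}"
  shows "sched_time \<rho> g N \<le> order_time \<rho> g vs"
  unfolding sched_time_def if_not_P[OF assms(4)]
  by (rule Min_le) (use finite_distinct_enums[OF assms(1)] assms in auto)

lemma sched_time_ge: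
  assumes "finite N" "v \<in> N" "0 \<le> \<rho>"
  shows "\<rho> + g v \<le> sched_time \<rho> g N"
proof -
  obtain vs where vs: "distinct vs" "set vs = N" "sched_time \<rho> g N = order_time \<rho> g vs"
    using sched_time_attained[OF assms(1)] assms(2) by blast
  obtain k where k: "k < length vs" "vs ! k = v"
    using vs(2) assms(2) by (metis in_set_conv_nth)
  have "\<rho> \<le> real (Suc k) * \<rho>" using assms(3) by (simp add: algebra_simps)
  then have "\<rho> + g v \<le> real (Suc k) * \<rho> + g (vs ! k)" using k by simp
  also have "\<dots> \<le> order_time \<rho> g vs" by (rule order_time_ge[OF k(1)])
  finally show ?thesis using vs by simp
qed

lemma sched_time_nonneg:
  assumes "finite N" "0 \<le> \<rho>" "\<forall>v\<in>N. 0 \<le> g v"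
  shows "0 \<le> sched_time \<rho> g N"
proof (cases "N = {}")
  case False
  then obtain v where "v \<in> N" by auto
  then show ?thesis using sched_time_ge[OF assms(1) _ assms(2), of v g] assms by force
qed (simp add: sched_time_def)

lemma sched_time_le_first:
  assumes "finite N" "v0 \<in> N" "0 \<le> \<rho>"
  shows "sched_time \<rho> g N \<le> max (\<rho> + g v0) (\<rho> + sched_time \<rho> g (N - {v0}))"
proof (cases "N - {v0} = {}")
  case True
  then have "N = {v0}" using assms by auto
  then have "sched_time \<rho> g N \<le> order_time \<rho> g [v0]"
    by (intro sched_time_le_order_time) auto
  also have "\<dots> = \<rho> + g v0" unfolding order_time_def by (simp add: lessThan_Suc)
  finally show ?thesis by simp
next
  case False
  obtain vs where vs: "distinct vs" "set vs = N - {v0}"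
      "sched_time \<rho> g (N - {v0}) = order_time \<rho> g vs"
    using sched_time_attained[OF _ False] assms by blast
  have "sched_time \<rho> g N \<le> order_time \<rho> g (v0 # vs)"
    by (rule sched_time_le_order_time) (use assms vs in auto)
  also have "\<dots> \<le> max (\<rho> + g v0) (\<rho> + order_time \<rho> g vs)"
  proof (rule order_time_le)
    fix k assume k: "k < length (v0 # vs)"
    show "real (Suc k) * \<rho> + g ((v0 # vs) ! k) \<le> max (\<rho> + g v0) (\<rho> + order_time \<rho> g vs)"
    proof (cases k)
      case (Suc j)
      then have "real (Suc k) * \<rho> + g ((v0 # vs) ! k) = \<rho> + (real (Suc j) * \<rho> + g (vs ! j))"
        by (simp add: algebra_simps)
      also have "\<dots> \<le> \<rho> + order_time \<rho> g vs"
        using order_time_ge[of j vs] Suc k by simp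
      finally show ?thesis by simp
    qed simp
  qed simp
  finally show ?thesis using vs by simp
qed

text \<open>Dropping a neighbour from an optimal order moves the later ones forward.\<close>

lemma sched_time_remove_le:
  assumes "finite N" "v0 \<in> N" "0 \<le> \<rho>" "\<forall>v\<in>N. 0 \<le> g v"
  shows "sched_time \<rho> g (N - {v0}) \<le> sched_time \<rho> g N"
proof (cases "N - {v0} = {}")
  case True
  then show ?thesis using sched_time_nonneg[OF assms(1,3,4)] by (simp add: sched_time_def)
next
  case False
  obtain vs where vs: "distinct vs" "set vs = N" "sched_time \<rho> g N = order_time \<rho> g vs"
    using sched_time_attained[OF assms(1)] assms(2) by blast
  obtain i where i: "i < length vs" "vs ! i = v0"
    using vs(2) assms(2) by (metis in_set_conv_nth)
  define ws where "ws = take i vs @ drop (Suc i) vs"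
  have ws_nth: "ws ! k = (if k < i then vs ! k else vs ! Suc k)" if "k < length ws" for k
    using that i unfolding ws_def by (simp add: nth_append min_def)
  have len_ws: "length ws = length vs - 1"
    using i unfolding ws_def by simp
  have ws: "distinct ws" "set ws = N - {v0}"
  proof -
    have split: "vs = take i vs @ v0 # drop (Suc i) vs"
      using i by (metis id_take_nth_drop)
    have "distinct (take i vs @ v0 # drop (Suc i) vs)" using vs(1) by (subst (asm) split)
    moreover have "set (take i vs @ v0 # drop (Suc i) vs) = N" using vs(2) by (subst (asm) split)
    ultimately show "distinct ws" "set ws = N - {v0}" unfolding ws_def by auto
  qed
  have "sched_time \<rho> g (N - {v0}) \<le> order_time \<rho> g ws"
    by (rule sched_time_le_order_time) (use assms ws False in auto)
  also have "\<dots> \<le> order_time \<rho> g vs"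
  proof (rule order_time_le)
    show "ws \<noteq> []" by (metis ws(2) False set_empty)
    fix k assume k: "k < length ws"
    show "real (Suc k) * \<rho> + g (ws ! k) \<le> order_time \<rho> g vs"
    proof (cases "k < i")
      case True
      then show ?thesis using ws_nth[OF k] order_time_ge[of k vs \<rho> g] k len_ws by simp
    next
      case False
      have "real (Suc k) * \<rho> + g (ws ! k) \<le> real (Suc (Suc k)) * \<rho> + g (vs ! Suc k)"
        using ws_nth[OF k] False assms(3) by (simp add: mult_right_mono)
      also have "\<dots> \<le> order_time \<rho> g vs" by (rule order_time_ge) (use k len_ws in simp)
      finally show ?thesis .
    qed
  qed
  finally show ?thesis using vs by simp
qed

lemma sched_time_mono:
  assumes "finite B" "A \<subseteq> B" "0 \<le> \<rho>" "\<forall>v\<in>B. 0 \<le> g v"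
  shows "sched_time \<rho> g A \<le> sched_time \<rho> g B"
proof -
  have "sched_time \<rho> g A \<le> sched_time \<rho> g (A \<union> D)" if "finite D" "D \<subseteq> B" for D
    using that
  proof (induction D rule: finite_induct)
    case (insert d D)
    show ?case
    proof (cases "d \<in> A \<union> D")
      case False
      have "finite (A \<union> insert d D)" "A \<union> insert d D \<subseteq> B"
        using assms(1,2) insert.prems finite_subset by auto
      then have "sched_time \<rho> g ((A \<union> insert d D) - {d}) \<le> sched_time \<rho> g (A \<union> insert d D)"
        using assms(3,4) by (intro sched_time_remove_le) auto
      moreover have "(A \<union> insert d D) - {d} = A \<union> D" using False by auto
      ultimately show ?thesis using insert by simp
    qed (use insert in \<open>simp add: insert_absorb\<close>)
  qed simp
  from this[of "B - A"] show ?thesis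
    using assms(1,2) by (simp add: Un_Diff_cancel Un_absorb1)
qed

lemma sched_time_le_add:
  assumes "finite N" "\<forall>v\<in>N. g v \<le> h v + c" "0 \<le> c"
  shows "sched_time \<rho> g N \<le> sched_time \<rho> h N + c"
proof (cases "N = {}")
  case False
  obtain vs where vs: "distinct vs" "set vs = N" "sched_time \<rho> h N = order_time \<rho> h vs"
    using sched_time_attained[OF assms(1) False] by blast
  have "sched_time \<rho> g N \<le> order_time \<rho> g vs"
    by (rule sched_time_le_order_time) (use assms vs False in auto)
  also have "\<dots> \<le> order_time \<rho> h vs + c"
  proof (rule order_time_le)
    show "vs \<noteq> []" using vs False by auto
    fix k assume k: "k < length vs"
    then have "g (vs ! k) \<le> h (vs ! k) + c" using assms(2) vs(2) by auto
    then show "real (Suc k) * \<rho> + g (vs ! k) \<le> order_time \<rho> h vs + c"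
      using order_time_ge[OF k, of \<rho> h] by simp
  qed
  finally show ?thesis using vs by simp
qed (use assms in \<open>simp add: sched_time_def\<close>)

lemma sched_time_cong: "\<forall>v\<in>N. g v = h v \<Longrightarrow> sched_time \<rho> g N = sched_time \<rho> h N"
proof -
  assume gh: "\<forall>v\<in>N. g v = h v"
  have "order_time \<rho> g vs = order_time \<rho> h vs" if "set vs = N" for vs
    unfolding order_time_def using gh that by (intro arg_cong[where f = Max] image_cong) auto
  then show ?thesis unfolding sched_time_def by (auto intro!: arg_cong[where f = Min] image_cong)
qed

section \<open>The broadcast recursion\<close>

lemma bt_Suc_sched_time:
  "bt \<rho> E s (Suc n) W u = sched_time \<rho> (\<lambda>v. s {u, v} + bt \<rho> E s n (comp E W u v) v) (nbrs E W u)"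
  by (simp add: sched_time_def order_time_def add.assoc)

lemma finite_nbrs: "finite W \<Longrightarrow> finite (nbrs E W u)"
  unfolding nbrs_def by simp

context
  fixes E :: "'v set set"
  assumes no_loops: "\<forall>z. {z} \<notin> E"
begin

lemma comp_nbr_subset: "v \<in> nbrs E W u \<Longrightarrow> comp E W u v \<subseteq> W - {u}"
  using comp_subset[of E W u v] no_loops unfolding nbrs_def by auto

lemma comp_nbr_finite: "finite W \<Longrightarrow> v \<in> nbrs E W u \<Longrightarrow> finite (comp E W u v)"
  using comp_nbr_subset by (metis finite_Diff finite_subset)

lemma card_comp_nbr_less:
  assumes "finite W" "u \<in> W" "v \<in> nbrs E W u"
  shows "card (comp E W u v) < card W"
proof -
  have "card (comp E W u v) \<le> card (W - {u})"
    using comp_nbr_subset[OF assms(3)] assms(1) by (intro card_mono) auto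
  also have "\<dots> < card W" using assms(1,2) by (rule card_Diff1_less)
  finally show ?thesis .
qed

text \<open>Every recursive call strictly shrinks the vertex set, so any fuel of at least card W
  yields the same value.\<close>

lemma bt_fuel:
  "finite W \<Longrightarrow> u \<in> W \<Longrightarrow> card W \<le> n \<Longrightarrow> card W \<le> n' \<Longrightarrow> bt \<rho> E s n W u = bt \<rho> E s n' W u"
proof (induction n arbitrary: n' W u)
  case 0
  then show ?case by (simp add: card_eq_0_iff)
next
  case (Suc n)
  then obtain n'' where n': "n' = Suc n''"
    by (cases n') (auto simp: card_eq_0_iff)
  have "bt \<rho> E s n (comp E W u v) v = bt \<rho> E s n'' (comp E W u v) v" if v: "v \<in> nbrs E W u" for v
    using Suc.IH[OF comp_nbr_finite comp_self] card_comp_nbr_less[OF Suc.prems(1,2) v]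
      Suc.prems(1,3,4) n' v by simp
  then show ?case unfolding n' bt_Suc_sched_time by (intro sched_time_cong) auto
qed

lemma btime_rec:
  assumes "finite W" "u \<in> W"
  shows "btime \<rho> E s W u = sched_time \<rho> (\<lambda>v. s {u, v} + btime \<rho> E s (comp E W u v) v) (nbrs E W u)"
proof -
  obtain n where n: "card W = Suc n"
    using assms by (cases "card W") (auto simp: card_eq_0_iff)
  have "bt \<rho> E s n (comp E W u v) v = btime \<rho> E s (comp E W u v) v" if v: "v \<in> nbrs E W u" for v
    unfolding btime_def using card_comp_nbr_less[OF assms v] n
    by (intro bt_fuel comp_nbr_finite[OF assms(1) v] comp_self) auto
  then show ?thesis unfolding btime_def n bt_Suc_sched_time by (intro sched_time_cong) auto
qed

lemma btime_nonneg:
  assumes "\<forall>e\<in>E. 0 \<le> s e" "0 \<le> \<rho>"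
  shows "finite W \<Longrightarrow> u \<in> W \<Longrightarrow> 0 \<le> btime \<rho> E s W u"
proof (induction "card W" arbitrary: W u rule: less_induct)
  case less
  have "0 \<le> s {u, v} + btime \<rho> E s (comp E W u v) v" if v: "v \<in> nbrs E W u" for v
    using less.hyps[OF card_comp_nbr_less[OF less.prems v] comp_nbr_finite[OF less.prems(1) v] comp_self]
      assms(1) v unfolding nbrs_def by auto
  then show ?case
    unfolding btime_rec[OF less.prems] by (intro sched_time_nonneg finite_nbrs less.prems assms(2)) auto
qed

lemma btime_local:
  "finite W \<Longrightarrow> u \<in> W \<Longrightarrow> \<forall>e\<in>E. e \<subseteq> W \<longrightarrow> s e = s' e \<Longrightarrow> btime \<rho> E s W u = btime \<rho> E s' W u"
proof (induction "card W" arbitrary: W u rule: less_induct)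
  case less
  have "s {u, v} + btime \<rho> E s (comp E W u v) v = s' {u, v} + btime \<rho> E s' (comp E W u v) v"
    if v: "v \<in> nbrs E W u" for v
  proof -
    have "comp E W u v \<subseteq> W" using comp_nbr_subset[OF v] by auto
    then have "btime \<rho> E s (comp E W u v) v = btime \<rho> E s' (comp E W u v) v"
      using less.prems(3)
      by (intro less.hyps[OF card_comp_nbr_less[OF less.prems(1,2) v]]
          comp_nbr_finite[OF less.prems(1) v] comp_self) auto
    moreover have "s {u, v} = s' {u, v}" using less.prems v unfolding nbrs_def by auto
    ultimately show ?thesis by simp
  qed
  then show ?case unfolding btime_rec[OF less.prems(1,2)] by (intro sched_time_cong) auto
qed

text \<open>Each edge of F is paid for once, at the recursion level where it joins a vertex to a child.\<close>

lemma btime_le_add_sum: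
  assumes F: "finite F" "\<forall>e\<in>F. t e \<le> s e" and off: "\<forall>e\<in>E - F. s e \<le> t e"
  shows "finite W \<Longrightarrow> u \<in> W \<Longrightarrow> btime \<rho> E s W u \<le> btime \<rho> E t W u + (\<Sum>e\<in>{e\<in>F. e \<subseteq> W}. s e - t e)"
proof (induction "card W" arbitrary: W u rule: less_induct)
  case less
  let ?c = "\<lambda>W. \<Sum>e\<in>{e\<in>F. e \<subseteq> W}. s e - t e"
  have "s {u, v} + btime \<rho> E s (comp E W u v) v \<le> t {u, v} + btime \<rho> E t (comp E W u v) v + ?c W"
    if v: "v \<in> nbrs E W u" for v
  proof -
    let ?C = "comp E W u v"
    have C: "?C \<subseteq> W - {u}" using comp_nbr_subset[OF v] .
    have IH: "btime \<rho> E s ?C v \<le> btime \<rho> E t ?C v + ?c ?C"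
      by (rule less.hyps[OF card_comp_nbr_less[OF less.prems(1,2) v] comp_nbr_finite[OF less.prems(1) v]
            comp_self])
    have uv: "{u, v} \<in> E" "{u, v} \<subseteq> W" using v less.prems unfolding nbrs_def by auto
    have fin: "finite {e\<in>F. e \<subseteq> W}" using F by simp
    have sub: "{e\<in>F. e \<subseteq> ?C} \<subseteq> {e\<in>F. e \<subseteq> W}" using C by auto
    have "s {u, v} - t {u, v} + ?c ?C \<le> ?c W" if "{u, v} \<in> F"
    proof -
      have "{u, v} \<notin> {e\<in>F. e \<subseteq> ?C}" using C by auto
      then have "s {u, v} - t {u, v} + ?c ?C = (\<Sum>e\<in>insert {u, v} {e\<in>F. e \<subseteq> ?C}. s e - t e)"
        using F(1) by simp
      also have "\<dots> \<le> ?c W"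
        by (rule sum_mono2[OF fin]) (use sub that uv F(2) in auto)
      finally show ?thesis .
    qed
    moreover have "?c ?C \<le> ?c W"
      by (rule sum_mono2[OF fin sub]) (use F(2) in auto)
    moreover have "s {u, v} \<le> t {u, v}" if "{u, v} \<notin> F" using off uv(1) that by blast
    ultimately show ?thesis using IH by (cases "{u, v} \<in> F") auto
  qed
  moreover have "0 \<le> ?c W" using F(2) by (intro sum_nonneg) auto
  ultimately show ?case
    unfolding btime_rec[OF less.prems(1,2)] by (intro sched_time_le_add finite_nbrs less.prems) auto
qed

end

section \<open>Paths in trees\<close>

lemma rtrancl_adj_path:
  assumes "(a, b) \<in> (adj E V)\<^sup>*"
  shows "\<exists>xs. is_path E xs \<and> hd xs = a \<and> last xs = b"
  using assms
proof (induction rule: rtrancl_induct)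
  case base
  have "is_path E [a]" unfolding is_path_def by simp
  then show ?case by force
next
  case (step y z)
  obtain xs where xs: "is_path E xs" "hd xs = a" "last xs = y" using step.IH by blast
  have yz: "{y, z} \<in> E" using step(2) unfolding adj_def by auto
  have ne: "xs \<noteq> []" and dxs: "distinct xs" and exs: "\<forall>i < length xs - 1. {xs ! i, xs ! Suc i} \<in> E"
    using xs(1) unfolding is_path_def by auto
  show ?case
  proof (cases "z \<in> set xs")
    case True
    then obtain j where j: "j < length xs" "xs ! j = z" by (metis in_set_conv_nth)
    define ys where "ys = take (Suc j) xs"
    have "is_path E ys"
      using dxs exs j unfolding is_path_def ys_def by auto
    moreover have "hd ys = a" using xs(2) ne unfolding ys_def by simp
    moreover have "last ys = z" using j unfolding ys_def by (simp add: take_Suc_conv_app_nth)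
    ultimately show ?thesis by blast
  next
    case False
    define ys where "ys = xs @ [z]"
    have "is_path E ys" unfolding is_path_def
    proof (intro conjI allI impI)
      show "ys \<noteq> []" "distinct ys" unfolding ys_def using dxs False by simp_all
      fix i assume i: "i < length ys - 1"
      show "{ys ! i, ys ! Suc i} \<in> E"
      proof (cases "i < length xs - 1")
        case True
        then have "Suc i < length xs" by simp
        then show ?thesis using exs True unfolding ys_def by (simp add: nth_append)
      next
        case False
        then have "i = length xs - 1" using i unfolding ys_def by simp
        then have "ys ! i = y" "ys ! Suc i = z"
          using ne xs(3) unfolding ys_def by (auto simp: nth_append last_conv_nth)
        then show ?thesis using yz by simp
      qed
    qed
    moreover have "hd ys = a" using xs(2) ne unfolding ys_def by simp
    moreover have "last ys = z" unfolding ys_def by simp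
    ultimately show ?thesis by blast
  qed
qed

lemma path_edges_subset: "path_edges E x y \<subseteq> E"
  unfolding path_edges_def is_path_def by blast

lemma distinct_edge_index_eq:
  assumes "distinct xs" "i < length xs - 1" "j < length xs - 1"
    and "{xs ! i, xs ! Suc i} = {xs ! j, xs ! Suc j}"
  shows "i = j"
proof -
  have "xs ! i = xs ! j \<and> xs ! Suc i = xs ! Suc j \<or> xs ! i = xs ! Suc j \<and> xs ! Suc i = xs ! j"
    using assms(4) by (auto simp: doubleton_eq_iff)
  then show ?thesis
    using assms(1-3) by (auto simp: nth_eq_iff_index_eq)
qed

lemma path_rtrancl_avoiding:
  assumes t: "is_tree V E" and xs: "is_path E xs" and ij: "i \<le> j" "j < length xs"
    and avoid: "\<And>k. i \<le> k \<Longrightarrow> k < j \<Longrightarrow> {xs ! k, xs ! Suc k} \<noteq> e"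
  shows "(xs ! i, xs ! j) \<in> (adj (E - {e}) V)\<^sup>*"
proof (rule rtrancl_of_steps[OF _ ij(1)])
  fix k assume k: "i \<le> k" "k < j"
  then have "{xs ! k, xs ! Suc k} \<in> E"
    using xs ij unfolding is_path_def by auto
  then show "(xs ! k, xs ! Suc k) \<in> adj (E - {e}) V"
    using tree_edge_ends[OF t] avoid[OF k] unfolding adj_def by auto
qed

text \<open>Tree paths are unique: an edge of one x-y path missing from another would be a bridge
  that the other path bypasses.\<close>

lemma tree_path_edge_shared:
  assumes t: "is_tree V E"
    and xs: "is_path E xs" and ys: "is_path E ys" "hd ys = hd xs" "last ys = last xs"
    and i: "i < length ys - 1"
  shows "\<exists>j < length xs - 1. {ys ! i, ys ! Suc i} = {xs ! j, xs ! Suc j}"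
proof (rule ccontr)
  assume missing: "\<not> ?thesis"
  let ?a = "ys ! i" and ?b = "ys ! Suc i" and ?F = "E - {{ys ! i, ys ! Suc i}}"
  have dys: "distinct ys" "ys \<noteq> []" and dxs: "xs \<noteq> []"
    using xs ys(1) unfolding is_path_def by auto
  have e: "{?a, ?b} \<in> E" using ys(1) i unfolding is_path_def by auto
  have other: "{ys ! k, ys ! Suc k} \<noteq> {?a, ?b}" if "k < length ys - 1" "k \<noteq> i" for k
    using distinct_edge_index_eq[OF dys(1) that(1) i] that(2) by blast
  have "(xs ! 0, xs ! (length xs - 1)) \<in> (adj ?F V)\<^sup>*"
    by (rule path_rtrancl_avoiding[OF t xs]) (use missing dxs in auto)
  moreover have "(ys ! 0, ?a) \<in> (adj ?F V)\<^sup>*"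
    by (rule path_rtrancl_avoiding[OF t ys(1)])
      (use i other in auto)
  moreover have "(?b, ys ! (length ys - 1)) \<in> (adj ?F V)\<^sup>*"
    by (rule path_rtrancl_avoiding[OF t ys(1)])
      (use i other in auto)
  moreover have "ys ! 0 = xs ! 0" "ys ! (length ys - 1) = xs ! (length xs - 1)"
    using ys(2,3) dys dxs by (simp_all add: hd_conv_nth last_conv_nth)
  ultimately have "(?a, ?b) \<in> (adj ?F V)\<^sup>*"
    by (metis rtrancl_adj_sym rtrancl_trans)
  then show False using tree_edge_bridge[OF t e] by simp
qed

section \<open>Broadcasting along a path\<close>

definition side_time :: "real \<Rightarrow> 'v set set \<Rightarrow> 'v set \<Rightarrow> ('v set \<Rightarrow> real) \<Rightarrow> 'v \<Rightarrow> 'v \<Rightarrow> real" where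
  "side_time \<rho> E V s a u = btime \<rho> E s (comp E V a u) u"

lemma btime_tree_rec:
  assumes "is_tree V E" "u \<in> V"
  shows "btime \<rho> E s V u = sched_time \<rho> (\<lambda>z. s {u, z} + side_time \<rho> E V s u z) (nbrs E V u)"
  unfolding side_time_def by (rule btime_rec[OF tree_no_loops tree_finite]) (use assms in auto)

lemma side_time_rec:
  assumes t: "is_tree V E" and e: "{a, u} \<in> E"
  shows "side_time \<rho> E V s a u = sched_time \<rho> (\<lambda>z. s {u, z} + side_time \<rho> E V s u z) (nbrs E V u - {a})"
proof -
  let ?W = "comp E V a u"
  note W = comp_edge_props[OF t e]
  have "side_time \<rho> E V s a u = sched_time \<rho> (\<lambda>z. s {u, z} + btime \<rho> E s (comp E ?W u z) z) (nbrs E ?W u)"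
    unfolding side_time_def by (rule btime_rec[OF tree_no_loops[OF t] W(1,2)])
  also have "\<dots> = sched_time \<rho> (\<lambda>z. s {u, z} + side_time \<rho> E V s u z) (nbrs E V u - {a})"
    unfolding nbrs_comp_edge[OF t e]
  proof (rule sched_time_cong, rule ballI)
    fix z assume "z \<in> nbrs E V u - {a}"
    then have "{u, z} \<in> E" "a \<noteq> z" unfolding nbrs_def by auto
    then have "comp E V u z \<subseteq> ?W" by (intro comp_subset_comp_edge[OF t e])
    then show "s {u, z} + btime \<rho> E s (comp E ?W u z) z = s {u, z} + side_time \<rho> E V s u z"
      unfolding side_time_def by (simp add: comp_restrict[OF W(2,3)])
  qed
  finally show ?thesis .
qed

lemma side_time_nonneg:
  assumes "is_tree V E" "{a, u} \<in> E" "\<forall>e\<in>E. 0 \<le> s e" "0 \<le> \<rho>"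
  shows "0 \<le> side_time \<rho> E V s a u"
  unfolding side_time_def
  using btime_nonneg[OF tree_no_loops[OF assms(1)] assms(3,4)] comp_edge_props[OF assms(1,2)] by blast

definition path_dist :: "real \<Rightarrow> ('v set \<Rightarrow> real) \<Rightarrow> 'v list \<Rightarrow> nat \<Rightarrow> real" where
  "path_dist \<rho> s xs i = (\<Sum>k = i..<length xs - 1. \<rho> + s {xs ! k, xs ! Suc k})"

locale tree_path =
  fixes V :: "'v set" and E :: "'v set set" and xs :: "'v list" and m :: nat
  assumes tree: "is_tree V E" and path: "is_path E xs" and length_path: "length xs = Suc m"
    and nontrivial: "1 \<le> m"
begin

lemma distinct_path: "distinct xs"
  using path unfolding is_path_def by simp

lemma path_edge: "i < m \<Longrightarrow> {xs ! i, xs ! Suc i} \<in> E"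
  using path length_path unfolding is_path_def by auto

lemma path_edge': "i < m \<Longrightarrow> {xs ! Suc i, xs ! i} \<in> E"
  using path_edge by (simp add: insert_commute)

lemma path_nth_neq: "i \<le> m \<Longrightarrow> j \<le> m \<Longrightarrow> i \<noteq> j \<Longrightarrow> xs ! i \<noteq> xs ! j"
  using distinct_path length_path by (simp add: nth_eq_iff_index_eq)

lemma path_next_nbr: "i < m \<Longrightarrow> xs ! Suc i \<in> nbrs E V (xs ! i)"
  using path_edge tree_edge_ends[OF tree path_edge] unfolding nbrs_def by auto

lemma path_prev_nbr: "i < m \<Longrightarrow> xs ! i \<in> nbrs E V (xs ! Suc i)"
  using path_edge' tree_edge_ends[OF tree path_edge'] unfolding nbrs_def by auto

lemma path_nth_in_V: "i \<le> m \<Longrightarrow> xs ! i \<in> V"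
  using tree_edge_ends[OF tree path_edge[of i]] tree_edge_ends[OF tree path_edge[of "i - 1"]] nontrivial
  by (cases "i < m") auto

lemma path_start_in_V: "xs ! 0 \<in> V"
  by (rule path_nth_in_V) simp

end

locale weighted_tree_path = tree_path +
  fixes \<rho> :: real and s :: "'v set \<Rightarrow> real"
  assumes rho_nonneg: "0 \<le> \<rho>" and weights_nonneg: "\<forall>e\<in>E. 0 \<le> s e"
begin

abbreviation side :: "'v \<Rightarrow> 'v \<Rightarrow> real" where
  "side a u \<equiv> side_time \<rho> E V s a u"

lemma path_dist_Suc: "i < m \<Longrightarrow> path_dist \<rho> s xs i = \<rho> + s {xs ! i, xs ! Suc i} + path_dist \<rho> s xs (Suc i)"
  unfolding path_dist_def length_path by (simp add: sum.atLeast_Suc_lessThan)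

lemma path_dist_end: "path_dist \<rho> s xs m = 0"
  unfolding path_dist_def length_path by simp

lemma path_dist_nonneg: "0 \<le> path_dist \<rho> s xs i"
  unfolding path_dist_def length_path
  using weights_nonneg path_edge rho_nonneg by (intro sum_nonneg) auto

lemma path_dist_ge: "i < m \<Longrightarrow> \<rho> \<le> path_dist \<rho> s xs i"
  using path_dist_Suc[of i] path_dist_nonneg[of "Suc i"] weights_nonneg path_edge[of i] by simp

lemma finite_nbrs_V: "finite (nbrs E V u)"
  by (rule finite_nbrs[OF tree_finite[OF tree]])

lemma nbr_weight_nonneg: "\<forall>z\<in>nbrs E V u. 0 \<le> s {u, z} + side u z"
proof
  fix z assume "z \<in> nbrs E V u"
  then have "{u, z} \<in> E" unfolding nbrs_def by simp
  then show "0 \<le> s {u, z} + side u z"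
    using weights_nonneg side_time_nonneg[OF tree _ weights_nonneg rho_nonneg] by (simp add: add_nonneg_nonneg)
qed

lemma side_path_ge:
  assumes "1 \<le> i" "i \<le> m"
  shows "path_dist \<rho> s xs i + side (xs ! (m - 1)) (xs ! m) \<le> side (xs ! (i - 1)) (xs ! i)"
  using assms(2,1)
proof (induction i rule: inc_induct)
  case (step n)
  then have n: "n < m" "1 \<le> n" by auto
  have e: "{xs ! (n - 1), xs ! n} \<in> E" using path_edge[of "n - 1"] n by simp
  have z: "xs ! Suc n \<in> nbrs E V (xs ! n) - {xs ! (n - 1)}"
    using path_next_nbr[OF n(1)] path_nth_neq[of "Suc n" "n - 1"] n by auto
  have "\<rho> + (s {xs ! n, xs ! Suc n} + side (xs ! n) (xs ! Suc n)) \<le> side (xs ! (n - 1)) (xs ! n)"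
    unfolding side_time_rec[OF tree e]
    by (rule sched_time_ge[OF _ z]) (use finite_nbrs_V rho_nonneg in auto)
  then show ?case using step.IH n path_dist_Suc[OF n(1)] by simp
qed (simp add: path_dist_end)

lemma btime_start_ge: "path_dist \<rho> s xs 0 + side (xs ! (m - 1)) (xs ! m) \<le> btime \<rho> E s V (xs ! 0)"
proof -
  have z: "xs ! 1 \<in> nbrs E V (xs ! 0)" using path_next_nbr[of 0] nontrivial by simp
  have "\<rho> + (s {xs ! 0, xs ! 1} + side (xs ! 0) (xs ! 1)) \<le> btime \<rho> E s V (xs ! 0)"
    unfolding btime_tree_rec[OF tree path_start_in_V]
    by (rule sched_time_ge[OF _ z]) (use finite_nbrs_V rho_nonneg in auto)
  then show ?thesis
    using side_path_ge[of 1] path_dist_Suc[of 0] nontrivial by simp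
qed

lemma side_back_mono:
  assumes "1 \<le> j" "j < m"
  shows "side (xs ! j) (xs ! (j - 1)) \<le> side (xs ! Suc j) (xs ! j)"
proof -
  have z: "xs ! (j - 1) \<in> nbrs E V (xs ! j) - {xs ! Suc j}"
    using path_prev_nbr[of "j - 1"] path_nth_neq[of "j - 1" "Suc j"] assms by auto
  have "\<rho> + (s {xs ! j, xs ! (j - 1)} + side (xs ! j) (xs ! (j - 1))) \<le> side (xs ! Suc j) (xs ! j)"
    unfolding side_time_rec[OF tree path_edge'[OF assms(2)]]
    by (rule sched_time_ge[OF _ z]) (use finite_nbrs_V rho_nonneg in auto)
  moreover have "0 \<le> s {xs ! j, xs ! (j - 1)}"
    using weights_nonneg path_edge'[of "j - 1"] assms by simp
  ultimately show ?thesis using rho_nonneg by simp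
qed

lemma side_back_le:
  assumes "i < m"
  shows "side (xs ! Suc i) (xs ! i) \<le> side (xs ! m) (xs ! (m - 1))"
proof -
  have "i \<le> m - 1" using assms by simp
  then show ?thesis
  proof (induction i rule: inc_induct)
    case (step n)
    then have "Suc n < m" by simp
    then show ?case using side_back_mono[of "Suc n"] step.IH by simp
  qed (use nontrivial in simp)
qed

text \<open>Informing the successor first is good enough: the remaining neighbours lie on the back
  side of the path edge to xs ! Suc n, and by backward monotonicity and the prime condition
  that side is never slower than the final side (xs ! (m - 1), xs ! m).\<close>

lemma sched_time_successor_first:
  assumes prime: "side (xs ! m) (xs ! (m - 1)) \<le> side (xs ! (m - 1)) (xs ! m)"
    and n: "n < m" and N: "N \<subseteq> nbrs E V (xs ! n)" "xs ! Suc n \<in> N"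
    and succ: "side (xs ! n) (xs ! Suc n) \<le> path_dist \<rho> s xs (Suc n) + side (xs ! (m - 1)) (xs ! m)"
  shows "sched_time \<rho> (\<lambda>z. s {xs ! n, z} + side (xs ! n) z) N
    \<le> path_dist \<rho> s xs n + side (xs ! (m - 1)) (xs ! m)"
proof -
  let ?g = "\<lambda>z. s {xs ! n, z} + side (xs ! n) z" and ?back = "nbrs E V (xs ! n) - {xs ! Suc n}"
  have "sched_time \<rho> ?g N \<le> max (\<rho> + ?g (xs ! Suc n)) (\<rho> + sched_time \<rho> ?g (N - {xs ! Suc n}))"
    using N finite_subset[OF N(1) finite_nbrs_V] by (intro sched_time_le_first rho_nonneg)
  moreover have "sched_time \<rho> ?g (N - {xs ! Suc n}) \<le> sched_time \<rho> ?g ?back"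
    using N(1) nbr_weight_nonneg by (intro sched_time_mono rho_nonneg) (auto intro: finite_nbrs_V)
  moreover have "sched_time \<rho> ?g ?back = side (xs ! Suc n) (xs ! n)"
    by (rule side_time_rec[OF tree path_edge'[OF n], symmetric])
  moreover have "side (xs ! Suc n) (xs ! n) \<le> side (xs ! (m - 1)) (xs ! m)"
    using side_back_le[OF n] prime by simp
  ultimately show ?thesis
    using succ path_dist_Suc[OF n] path_dist_ge[OF n] by simp
qed

lemma side_path_le:
  assumes prime: "side (xs ! m) (xs ! (m - 1)) \<le> side (xs ! (m - 1)) (xs ! m)"
    and i: "1 \<le> i" "i \<le> m"
  shows "side (xs ! (i - 1)) (xs ! i) \<le> path_dist \<rho> s xs i + side (xs ! (m - 1)) (xs ! m)"
  using i(2,1)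
proof (induction i rule: inc_induct)
  case (step n)
  then have n: "n < m" "1 \<le> n" by auto
  have e: "{xs ! (n - 1), xs ! n} \<in> E" using path_edge[of "n - 1"] n by simp
  show ?case
    unfolding side_time_rec[OF tree e]
    using step.IH path_next_nbr[OF n(1)] path_nth_neq[of "Suc n" "n - 1"] n
    by (intro sched_time_successor_first[OF prime n(1)]) auto
qed (simp add: path_dist_end)

lemma btime_start_le:
  assumes prime: "side (xs ! m) (xs ! (m - 1)) \<le> side (xs ! (m - 1)) (xs ! m)"
  shows "btime \<rho> E s V (xs ! 0) \<le> path_dist \<rho> s xs 0 + side (xs ! (m - 1)) (xs ! m)"
  unfolding btime_tree_rec[OF tree path_start_in_V]
  using side_path_le[OF prime, of 1] path_next_nbr[of 0] nontrivial
  by (intro sched_time_successor_first[OF prime]) auto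

end

section \<open>Regret along a path\<close>

context tree_path
begin

lemma path_nonempty: "xs \<noteq> []"
  using length_path by auto

lemma hd_path: "hd xs = xs ! 0"
  using path_nonempty by (simp add: hd_conv_nth)

lemma last_path: "last xs = xs ! m"
  using path_nonempty length_path by (simp add: last_conv_nth)

lemma path_edges_eq: "path_edges E (xs ! 0) (xs ! m) = (\<lambda>i. {xs ! i, xs ! Suc i}) ` {..<m}"
proof (intro equalityI subsetI)
  fix e assume "e \<in> path_edges E (xs ! 0) (xs ! m)"
  then obtain ys i where ys: "is_path E ys" "hd ys = hd xs" "last ys = last xs"
      and i: "i < length ys - 1" "e = {ys ! i, ys ! Suc i}"
    unfolding path_edges_def hd_path last_path by blast
  then show "e \<in> (\<lambda>i. {xs ! i, xs ! Suc i}) ` {..<m}"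
    using tree_path_edge_shared[OF tree path ys i(1)] length_path by auto
next
  fix e assume "e \<in> (\<lambda>i. {xs ! i, xs ! Suc i}) ` {..<m}"
  then obtain i where "i < length xs - 1" "e = {xs ! i, xs ! Suc i}"
    using length_path by auto
  then show "e \<in> path_edges E (xs ! 0) (xs ! m)"
    unfolding path_edges_def using path hd_path last_path by blast
qed

lemma sum_path_edges:
  "(\<Sum>e\<in>path_edges E (xs ! 0) (xs ! m). f e) = (\<Sum>i<m. f {xs ! i, xs ! Suc i})"
  unfolding path_edges_eq
proof (rule sum.reindex_cong[OF _ refl refl], rule inj_onI)
  fix i j assume "i \<in> {..<m}" "j \<in> {..<m}" "{xs ! i, xs ! Suc i} = {xs ! j, xs ! Suc j}"
  then show "i = j" using distinct_edge_index_eq[OF distinct_path] length_path by simp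
qed

lemma path_dist_eq_add:
  "path_dist \<rho> s xs 0 = path_dist \<rho> t xs 0 + (\<Sum>e\<in>path_edges E (xs ! 0) (xs ! m). s e - t e)"
  unfolding sum_path_edges path_dist_def length_path
  by (simp add: atLeast0LessThan sum.distrib[symmetric] sum_subtractf[symmetric])

lemma path_prefix_near_side: "i < m \<Longrightarrow> xs ! i \<in> comp E V (xs ! m) (xs ! 0)"
  unfolding mem_comp_iff
proof (rule rtrancl_of_steps)
  fix k assume "0 \<le> k" "k < i" "i < m"
  then show "(xs ! k, xs ! Suc k) \<in> adj E (V - {xs ! m})"
    using path_edge[of k] path_nth_in_V[of k] path_nth_in_V[of "Suc k"]
      path_nth_neq[of k m] path_nth_neq[of "Suc k" m]
    unfolding adj_def by auto
qed simp

lemma far_side_edge: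
  assumes "e \<in> E" "e \<subseteq> comp E V (xs ! (m - 1)) (xs ! m)"
  shows "e \<notin> path_edges E (xs ! 0) (xs ! m)" "\<not> e \<subseteq> comp E V (xs ! m) (xs ! 0)"
proof -
  let ?p = "xs ! (m - 1)" and ?y = "xs ! m"
  have e: "{?p, ?y} \<in> E" using path_edge[of "m - 1"] nontrivial by simp
  have "comp E V ?y (xs ! 0) = comp E V ?y ?p"
    using path_prefix_near_side[of "m - 1"] nontrivial by (intro comp_eq) (simp add: mem_comp_iff)
  then have disj: "comp E V ?y (xs ! 0) \<inter> comp E V ?p ?y = {}"
    using comp_edge_disjoint[OF tree e] by blast
  then show "\<not> e \<subseteq> comp E V ?y (xs ! 0)"
    using assms tree_edge_nonempty[OF tree] by blast
  show "e \<notin> path_edges E (xs ! 0) ?y"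
    using assms(2) disj path_prefix_near_side unfolding path_edges_eq by blast
qed

lemma regret_le:
  assumes \<rho>: "0 \<le> \<rho>" and s_nonneg: "\<forall>e\<in>E. 0 \<le> s e" and t_nonneg: "\<forall>e\<in>E. 0 \<le> t e"
    and prime: "side_time \<rho> E V t (xs ! m) (xs ! (m - 1)) \<le> side_time \<rho> E V t (xs ! (m - 1)) (xs ! m)"
    and far: "\<forall>e\<in>E. e \<subseteq> comp E V (xs ! (m - 1)) (xs ! m) \<longrightarrow> s e = t e"
    and on_path: "\<forall>e\<in>path_edges E (xs ! 0) (xs ! m). t e \<le> s e"
    and off_path: "\<forall>e\<in>E - path_edges E (xs ! 0) (xs ! m). s e \<le> t e"
  shows "regret \<rho> V E t (xs ! 0) (xs ! m) \<le> regret \<rho> V E s (xs ! 0) (xs ! m)"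
proof -
  interpret S: weighted_tree_path V E xs m \<rho> s by unfold_locales (fact \<rho> s_nonneg)+
  interpret T: weighted_tree_path V E xs m \<rho> t by unfold_locales (fact \<rho> t_nonneg)+
  let ?P = "path_edges E (xs ! 0) (xs ! m)" and ?p = "xs ! (m - 1)" and ?y = "xs ! m"
  have "side_time \<rho> E V s ?p ?y = side_time \<rho> E V t ?p ?y"
    unfolding side_time_def
    using comp_edge_props[OF tree path_edge[of "m - 1"]] nontrivial far
    by (intro btime_local[OF tree_no_loops[OF tree]]) auto
  moreover have "btime \<rho> E s V ?y \<le> btime \<rho> E t V ?y + (\<Sum>e\<in>?P. s e - t e)"
  proof -
    have "{e\<in>?P. e \<subseteq> V} = ?P"
      using path_edges_subset[of E "xs ! 0" "xs ! m"] tree_edge_subset[OF tree] by blast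
    then show ?thesis
      using btime_le_add_sum[OF tree_no_loops[OF tree] _ on_path off_path tree_finite[OF tree]]
        path_nth_in_V[of m] path_edges_eq by simp
  qed
  ultimately show ?thesis
    unfolding regret_def
    using S.btime_start_ge T.btime_start_le[OF prime] path_dist_eq_add[of \<rho> s t] by simp
qed

end

lemma tree_path_between:
  assumes t: "is_tree V E" and "x \<in> V" "y \<in> V" "x \<noteq> y"
  obtains xs m where "tree_path V E xs m" "xs ! 0 = x" "xs ! m = y"
proof -
  obtain xs where xs: "is_path E xs" "hd xs = x" "last xs = y"
    using rtrancl_adj_path[OF tree_connected[OF assms(1-3)]] by blast
  then obtain m where m: "length xs = Suc m"
    unfolding is_path_def by (cases xs) auto
  have "xs \<noteq> []" using m by auto
  then have "xs ! 0 = x" "xs ! m = y"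
    using xs m by (simp_all add: hd_conv_nth last_conv_nth)
  moreover have "1 \<le> m" using calculation \<open>x \<noteq> y\<close> by (cases m) auto
  ultimately show thesis
    using that t xs(1) m unfolding tree_path_def by blast
qed

lemma patched_scenario:
  assumes t: "is_tree V E" and t_bounds: "t \<in> scenarios E wl wu"
    and s: "s = (\<lambda>e. if e \<in> path_edges E x y \<union> edges_of E (Tsub E V y x)
                     then alpha V E wl wu x y e else t e)"
  shows "s \<in> scenarios E wl wu"
    and "\<forall>e\<in>path_edges E x y. t e \<le> s e"
    and "\<forall>e\<in>E - path_edges E x y. s e \<le> t e"
    and "\<forall>e\<in>E. e \<notin> path_edges E x y \<longrightarrow> \<not> e \<subseteq> Tsub E V y x \<longrightarrow> s e = t e"
proof -
  have edges_split: "e \<notin> edges_of E (Tbar E V y x)" if "e \<in> edges_of E (Tsub E V y x)" for e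
    using that tree_edge_nonempty[OF t] unfolding edges_of_def Tbar_def by blast
  show "s \<in> scenarios E wl wu" "\<forall>e\<in>path_edges E x y. t e \<le> s e"
    using t_bounds path_edges_subset[of E x y] unfolding s scenarios_def alpha_def by auto
  show "\<forall>e\<in>E - path_edges E x y. s e \<le> t e"
    using t_bounds edges_split unfolding s scenarios_def alpha_def by auto
  show "\<forall>e\<in>E. e \<notin> path_edges E x y \<longrightarrow> \<not> e \<subseteq> Tsub E V y x \<longrightarrow> s e = t e"
    unfolding s edges_of_def by auto
qed

lemma worst_case_if_regret_ge:
  assumes wc: "worst_case \<rho> V E wl wu x t" and center: "y \<in> bcenters \<rho> V E t"
    and s: "s \<in> scenarios E wl wu" and ge: "regret \<rho> V E t x y \<le> regret \<rho> V E s x y"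
  shows "worst_case \<rho> V E wl wu x s \<and> y \<in> bcenters \<rho> V E s"
proof -
  obtain y' where "y' \<in> V"
    and max: "\<forall>v\<in>V. \<forall>s'\<in>scenarios E wl wu. regret \<rho> V E s' x v \<le> regret \<rho> V E t x y'"
    using wc unfolding worst_case_def by blast
  then have "regret \<rho> V E t x y' \<le> regret \<rho> V E t x y"
    using center unfolding bcenters_def regret_def by auto
  then have bound: "\<forall>v\<in>V. \<forall>s'\<in>scenarios E wl wu. regret \<rho> V E s' x v \<le> regret \<rho> V E s x y"
    using max ge by fastforce
  moreover have "y \<in> V" using center unfolding bcenters_def by simp
  ultimately show ?thesis
    using s unfolding worst_case_def bcenters_def regret_def by fastforce
qed

lemma prime_center_side_time:
  assumes t: "is_tree V E" and prime: "prime_center \<rho> V E s y" and e: "{p, y} \<in> E"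
  shows "side_time \<rho> E V s y p \<le> side_time \<rho> E V s p y"
proof -
  have e': "{y, p} \<in> E" using e by (simp add: insert_commute)
  then have "p \<in> nbrs E V y"
    using tree_edge_ends[OF t e'] unfolding nbrs_def by blast
  then have "btime \<rho> E s (Tbar E V p y) p \<le> btime \<rho> E s (Tbar E V y p) y"
    using prime unfolding prime_center_def by blast
  then show ?thesis
    unfolding side_time_def Tbar_edge[OF t e] Tbar_edge[OF t e'] .
qed

theorem fact1:
  fixes V :: "'v set" and E :: "'v set set" and wl wu :: "'v set \<Rightarrow> real" and \<rho> :: real
    and x y :: 'v and sdd :: "'v set \<Rightarrow> real"
  assumes "is_tree V E" and "\<rho> > 0"
    and "\<forall>e\<in>E. 0 \<le> wl e \<and> wl e \<le> wu e"
    and "x \<in> V" and "y \<in> V" and "y \<noteq> x"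
    and "worst_case \<rho> V E wl wu x sdd"
    and "prime_center \<rho> V E sdd y"
  defines "s \<equiv> (\<lambda>e. if e \<in> path_edges E x y \<union> edges_of E (Tsub E V y x)
                      then alpha V E wl wu x y e else sdd e)"
  shows "worst_case \<rho> V E wl wu x s \<and> y \<in> bcenters \<rho> V E s"
proof -
  note t = assms(1)
  obtain xs m where xs: "tree_path V E xs m" and x: "xs ! 0 = x" and y: "xs ! m = y"
    using tree_path_between[OF t assms(4,5)] assms(6) by metis
  interpret tree_path V E xs m by (fact xs)
  have sdd: "sdd \<in> scenarios E wl wu" using assms(7) unfolding worst_case_def by simp
  note s = patched_scenario[OF t sdd s_def[THEN meta_eq_to_obj_eq]]
  have nonneg: "\<forall>e\<in>E. 0 \<le> sdd e" "\<forall>e\<in>E. 0 \<le> s e"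
    using s(1) sdd assms(3) unfolding scenarios_def by force+
  have "{xs ! (m - 1), y} \<in> E"
    using path_edge[of "m - 1"] nontrivial y by simp
  then have prime: "side_time \<rho> E V sdd y (xs ! (m - 1)) \<le> side_time \<rho> E V sdd (xs ! (m - 1)) y"
    by (rule prime_center_side_time[OF t assms(8)])
  have "\<forall>e\<in>E. e \<subseteq> comp E V (xs ! (m - 1)) y \<longrightarrow> s e = sdd e"
    using s(4) far_side_edge unfolding Tsub_def x[symmetric] y[symmetric] by blast
  then have "regret \<rho> V E sdd x y \<le> regret \<rho> V E s x y"
    using regret_le[of \<rho> s sdd] assms(2) nonneg prime s(2,3) unfolding x[symmetric] y[symmetric] by simp
  then show ?thesis
    using worst_case_if_regret_ge[OF assms(7) _ s(1)] assms(8) unfolding prime_center_def by blast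
qed

end
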